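(* For every Borel measure $\mu$ on $\mathbb R$ (with its usual topology), the restriction of $\mu$ to the open subsets of the Sorgenfrey line $\mathbb R_\ell$ is a continuous valuation.
   Context: The Sorgenfrey line $\mathbb R_\ell$ is $\mathbb R$ with the topology generated by the half-open intervals $[a,b[$, $a<b$; its open sets are Borel subsets of $\mathbb R$. A continuous valuation on a space $X$ is a map $\nu:\mathcal OX\to[0,\infty]$ with $\nu(\emptyset)=0$, monotone, modular, and preserving suprema of directed families of open sets. *)

theory Defs
  imports "HOL-Analysis.Analysis"
begin

definition sorgenfrey :: "real topology" where
  "sorgenfrey = topology_generated_by {{a..<b} | a b. a < b}"

definition directed_family :: "'a set set \<Rightarrow> bool" where
  "directed_family D \<longleftrightarrow> D \<noteq> {} \<and> (\<forall>U\<in>D. \<forall>V\<in>D. \<exists>W\<in>D. U \<subseteq> W \<and> V \<subseteq> W)"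

text \<open>Continuous valuation on a topological space X: a map from the open sets
  to [0,\<infinity>] (values outside the open sets are irrelevant).\<close>
definition continuous_valuation :: "'a topology \<Rightarrow> ('a set \<Rightarrow> ennreal) \<Rightarrow> bool" where
  "continuous_valuation X \<nu> \<longleftrightarrow>
     \<nu> {} = 0 \<and>
     (\<forall>U V. openin X U \<and> openin X V \<and> U \<subseteq> V \<longrightarrow> \<nu> U \<le> \<nu> V) \<and>
     (\<forall>U V. openin X U \<and> openin X V \<longrightarrow> \<nu> U + \<nu> V = \<nu> (U \<union> V) + \<nu> (U \<inter> V)) \<and>
     (\<forall>D. (\<forall>U\<in>D. openin X U) \<and> directed_family D \<longrightarrow> \<nu> (\<Union>D) = (SUP U\<in>D. \<nu> U))"

end

theory Submission
  imports Defs
begin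

text \<open>A point of a Sorgenfrey open set U that is not in its Euclidean interior still has an
  interval [x,b[ inside U, so ]x,b[ lies in the interior and misses all such points; distinct
  rationals in these gaps show that U differs from its interior by a countable set, so U is Borel.
  In the same way a union of Sorgenfrey open sets is a countable subunion (Lindelof for the
  interiors) plus countably many points. A directed union thus equals the union of an increasing
  sequence taken from the family, and continuity of the measure from below gives the supremum.\<close>

lemma openin_sorgenfreyD:
  assumes "openin sorgenfrey U" "x \<in> U"
  shows "\<exists>b>x. {x..<b} \<subseteq> U"
proof -
  have "\<forall>x\<in>U. \<exists>b>x. {x..<b} \<subseteq> U"
    using assms(1) unfolding sorgenfrey_def openin_topology_generated_by_iff
  proof (induction rule: generate_topology_on.induct)
    case (Int V W)
    show ?case
    proof
      fix x assume "x \<in> V \<inter> W"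
      then obtain b c where "b > x" "{x..<b} \<subseteq> V" "c > x" "{x..<c} \<subseteq> W"
        using Int.IH by blast
      then show "\<exists>d>x. {x..<d} \<subseteq> V \<inter> W"
        by (intro exI[of _ "min b c"]) auto
    qed
  next
    case (UN K)
    then show ?case by (meson UnionE UnionI subset_iff)
  qed auto
  with assms(2) show ?thesis by blast
qed

lemma countable_right_isolated:
  fixes C :: "real set"
  assumes "\<And>x. x \<in> C \<Longrightarrow> \<exists>b>x. {x<..<b} \<inter> C = {}"
  shows "countable C"
proof -
  obtain b where b: "\<And>x. x \<in> C \<Longrightarrow> b x > x \<and> {x<..<b x} \<inter> C = {}"
    using assms by metis
  have "\<forall>x\<in>C. \<exists>r\<in>\<rat>. x < r \<and> r < b x"
    using b Rats_dense_in_real by blast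
  then obtain q where q: "\<And>x. x \<in> C \<Longrightarrow> q x \<in> \<rat> \<and> x < q x \<and> q x < b x"
    by metis
  have q_less: "q x < q y" if "x \<in> C" "y \<in> C" "x < y" for x y
  proof -
    have "b x \<le> y" using b[OF that(1)] that by fastforce
    then show ?thesis using q[OF that(1)] q[OF that(2)] by linarith
  qed
  have "countable (q ` C)"
    using q countable_rat by (blast intro: countable_subset)
  moreover have "inj_on q C"
    by (rule inj_onI) (metis q_less less_irrefl linorder_neqE_linordered_idom)
  ultimately show ?thesis by (rule countable_image_inj_on)
qed

lemma countable_sorgenfrey_Union_diff_interiors:
  assumes "\<And>U. U \<in> D \<Longrightarrow> openin sorgenfrey U"
  shows "countable (\<Union>D - (\<Union>U\<in>D. interior U))" (is "countable ?C")
proof (rule countable_right_isolated)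
  fix x assume "x \<in> ?C"
  then obtain U where U: "U \<in> D" "x \<in> U" by blast
  then obtain b where "b > x" "{x..<b} \<subseteq> U"
    using assms openin_sorgenfreyD by blast
  then have "{x<..<b} \<subseteq> interior U"
    by (intro interior_maximal) auto
  with U \<open>b > x\<close> show "\<exists>b>x. {x<..<b} \<inter> ?C = {}" by blast
qed

lemma openin_sorgenfrey_borel:
  assumes "openin sorgenfrey U"
  shows "U \<in> sets borel"
proof -
  have "countable (U - interior U)"
    using countable_sorgenfrey_Union_diff_interiors[of "{U}"] assms by simp
  then have "U - interior U \<in> sets borel"
    by (rule sets.countable[rotated]) simp
  moreover have "U = (U - interior U) \<union> interior U"
    using interior_subset by blast
  ultimately show ?thesis
    by (metis borel_open open_interior sets.Un)
qed

lemma sorgenfrey_countable_subfamily: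
  assumes "\<And>U. U \<in> D \<Longrightarrow> openin sorgenfrey U"
  obtains D' where "D' \<subseteq> D" "countable D'" "\<Union>D' = \<Union>D"
proof -
  obtain F where F: "F \<subseteq> interior ` D" "countable F" "\<Union>F = (\<Union>U\<in>D. interior U)"
    using Lindelof[of "interior ` D"] by auto
  then obtain D1 where D1: "D1 \<subseteq> D" "countable D1" "F = interior ` D1"
    using countable_subset_image[of F interior D] by blast
  define C where "C = \<Union>D - (\<Union>U\<in>D. interior U)"
  have "countable C"
    unfolding C_def using assms by (rule countable_sorgenfrey_Union_diff_interiors)
  have "\<forall>x\<in>C. \<exists>U\<in>D. x \<in> U"
    unfolding C_def by blast
  then obtain V where V: "\<And>x. x \<in> C \<Longrightarrow> V x \<in> D \<and> x \<in> V x"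
    by metis
  show ?thesis
  proof (rule that[of "D1 \<union> V ` C"])
    show "D1 \<union> V ` C \<subseteq> D" using D1(1) V by blast
    then show "\<Union>(D1 \<union> V ` C) = \<Union>D"
    proof (intro antisym)
      have "\<Union>D \<subseteq> \<Union>(interior ` D1) \<union> C"
        using F(3) D1(3) C_def by blast
      also have "\<dots> \<subseteq> \<Union>(D1 \<union> V ` C)"
        using V interior_subset by blast
      finally show "\<Union>D \<subseteq> \<Union>(D1 \<union> V ` C)" .
    qed blast
    show "countable (D1 \<union> V ` C)" using D1(2) \<open>countable C\<close> by blast
  qed
qed

lemma directed_family_incseq_above:
  assumes "directed_family D" "\<And>n. g n \<in> D"
  obtains H where "incseq H" "\<And>n. H n \<in> D" "\<And>n. g n \<subseteq> H n"
proof -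
  obtain ub where ub: "\<And>U V. U \<in> D \<Longrightarrow> V \<in> D \<Longrightarrow> ub U V \<in> D \<and> U \<subseteq> ub U V \<and> V \<subseteq> ub U V"
    using assms(1) unfolding directed_family_def by metis
  define H where "H = rec_nat (g 0) (\<lambda>n U. ub U (g (Suc n)))"
  have H: "H n \<in> D \<and> g n \<subseteq> H n" for n
    by (induction n) (simp_all add: H_def assms(2) ub)
  have "incseq H"
    by (rule incseq_SucI) (simp add: H_def H[unfolded H_def] assms(2) ub)
  with H show ?thesis using that by blast
qed

lemma emeasure_Union_directed:
  assumes "D \<subseteq> sets M" "directed_family D"
    and "D' \<subseteq> D" "countable D'" "\<Union>D' = \<Union>D"
  shows "emeasure M (\<Union>D) = (SUP U\<in>D. emeasure M U)"
proof (cases "D' = {}")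
  case True
  with assms(5) have "\<Union>D = {}" by simp
  then have "emeasure M (\<Union>D) = 0"
    by (simp only: emeasure_empty)
  moreover have "(SUP U\<in>D. emeasure M U) = (SUP U\<in>D. 0)"
    using \<open>\<Union>D = {}\<close> by (intro SUP_cong) auto
  ultimately show ?thesis
    by (cases "D = {}") (simp_all add: bot_ennreal)
next
  case False
  define g where "g = from_nat_into D'"
  have g: "g n \<in> D" for n
    unfolding g_def using from_nat_into[OF False] assms(3) by blast
  obtain H where H: "incseq H" "\<And>n. H n \<in> D" "\<And>n. g n \<subseteq> H n"
    using directed_family_incseq_above[of D g, OF assms(2) g] by blast
  have "\<Union>D = (\<Union>n. g n)"
    using range_from_nat_into[OF False assms(4)] assms(5) by (simp add: g_def)
  have "\<Union>D = (\<Union>n. H n)"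
  proof
    show "\<Union>D \<subseteq> (\<Union>n. H n)"
      using \<open>\<Union>D = (\<Union>n. g n)\<close> H(3) by blast
    show "(\<Union>n. H n) \<subseteq> \<Union>D"
      using H(2) by blast
  qed
  moreover have "range H \<subseteq> sets M"
    using H(2) assms(1) by blast
  ultimately have "emeasure M (\<Union>D) = (SUP n. emeasure M (H n))"
    using SUP_emeasure_incseq[OF _ H(1)] by simp
  also have "\<dots> \<le> (SUP U\<in>D. emeasure M U)"
    using H(2) by (intro SUP_least SUP_upper)
  finally have "emeasure M (\<Union>D) \<le> (SUP U\<in>D. emeasure M U)" .
  moreover have "(SUP U\<in>D. emeasure M U) \<le> emeasure M (\<Union>D)"
    using \<open>\<Union>D = (\<Union>n. H n)\<close> \<open>range H \<subseteq> sets M\<close>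
    by (intro SUP_least emeasure_mono) auto
  ultimately show ?thesis
    by (rule antisym)
qed

theorem proposition4p7:
  fixes \<mu> :: "real measure"
  assumes "sets \<mu> = sets borel"
  shows "continuous_valuation sorgenfrey (\<lambda>U. emeasure \<mu> U)"
proof -
  have sets: "U \<in> sets \<mu>" if "openin sorgenfrey U" for U
    using assms openin_sorgenfrey_borel that by auto
  have directed: "emeasure \<mu> (\<Union>D) = (SUP U\<in>D. emeasure \<mu> U)"
    if D: "\<forall>U\<in>D. openin sorgenfrey U" "directed_family D" for D
  proof -
    obtain D' where "D' \<subseteq> D" "countable D'" "\<Union>D' = \<Union>D"
      using sorgenfrey_countable_subfamily[of D] D(1) by blast
    moreover have "D \<subseteq> sets \<mu>" using sets D(1) by blast
    ultimately show ?thesis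
      using emeasure_Union_directed[OF _ D(2)] by blast
  qed
  show ?thesis
    unfolding continuous_valuation_def
    using sets directed by (auto intro!: emeasure_mono emeasure_Un_Int)
qed

end
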